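(* Let $H\ge1$, $V$ a finite node set and $r\in V$. Let $\mathcal{A}$ and $\mathcal{P}$ be the hop-constrained tree polytopes defined in the context, and let $\mathcal{A}_X=\{x:\exists y,\ (x,y)\in\mathcal{A}\}$ and $\mathcal{P}_X=\{x:\exists l,g,\ (x,l,g)\in\mathcal{P}\}$ be their projections onto the $x$-variable space. Then $\mathcal{P}_X\subseteq\mathcal{A}_X$.
   Context: Setting: $V$ is the node set of a complete undirected graph, $r\in V$ a root, $H$ the hop limit. For every ordered pair $(u,v)$ of distinct nodes there is a real variable $x_{u,v}$. Common constraints: (X1) $\sum_{u\in V\setminus\{v\}}x_{u,v}\le 1$ for all $v\in V$; (X2) $\sum_{u\in V\setminus\{v,w\}}x_{u,v}\ge x_{v,w}$ for all $v\in V\setminus\{r\}$, $w\in V\setminus\{v\}$; (X3) $0\le x_{u,v}\le 1$ for all arcs. Partial-ordering polytope $\mathcal{P}$: variables $x$ and $l_{v,i},g_{i,v}$ for $v\in V$, $i\in\{0,\dots,H\}$, satisfying (X1)–(X3) and: $l_{r,0}=g_{0,r}=0$; $l_{v,1}=g_{H,v}=0$ for $v\neq r$; $l_{v,i}-l_{v,i+1}\le0$ for $v\in V$, $i=0,\dots,H-1$; $g_{i,v}+l_{v,i+1}=1$ for $v\in V$, $i=0,\dots,H-1$; $l_{u,i}+g_{i,v}\ge x_{u,v}$ for $u\in V$, $v\neq u$, $i=0,\dots,H$; $0\le l_{v,i},g_{i,v}\le1$. Assignment polytope $\mathcal{A}$: variables $x$ and $y_{v,i}$ for $v\in V$, $i\in\{0,\dots,H\}$,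 satisfying (X1)–(X3) and: $y_{r,0}=1$; $y_{r,i}=0$ for $i=1,\dots,H$; $y_{v,0}=0$ for $v\neq r$; $\sum_{i=1}^H y_{v,i}=1$ for $v\neq r$; $y_{u,i}-y_{v,i+1}+x_{u,v}\le1$ for $u\in V$, $v\neq u$, $i=0,\dots,H-1$; $y_{u,H}+x_{u,v}\le 1$ for $u\in V$, $v\neq u$; $0\le y_{v,i}\le 1$. *)

theory Defs
  imports Complex_Main
begin

text \<open>Arc variables x u v for ordered pairs (u,v) of distinct nodes of V;
  values of x outside these pairs are unconstrained (irrelevant).\<close>

definition arc_constraints :: "'a set \<Rightarrow> 'a \<Rightarrow> ('a \<Rightarrow> 'a \<Rightarrow> real) \<Rightarrow> bool" where
  "arc_constraints V r x \<longleftrightarrow>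
     (\<forall>v\<in>V. (\<Sum>u\<in>V - {v}. x u v) \<le> 1) \<and>
     (\<forall>v\<in>V - {r}. \<forall>w\<in>V - {v}. (\<Sum>u\<in>V - {v, w}. x u v) \<ge> x v w) \<and>
     (\<forall>u\<in>V. \<forall>v\<in>V - {u}. 0 \<le> x u v \<and> x u v \<le> 1)"

definition in_P :: "'a set \<Rightarrow> 'a \<Rightarrow> nat \<Rightarrow> ('a \<Rightarrow> 'a \<Rightarrow> real) \<Rightarrow>
    ('a \<Rightarrow> nat \<Rightarrow> real) \<Rightarrow> (nat \<Rightarrow> 'a \<Rightarrow> real) \<Rightarrow> bool" where
  "in_P V r H x l g \<longleftrightarrow>
     arc_constraints V r x \<and>
     l r 0 = 0 \<and> g 0 r = 0 \<and>
     (\<forall>v\<in>V - {r}. l v 1 = 0 \<and> g H v = 0) \<and>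
     (\<forall>v\<in>V. \<forall>i<H. l v i - l v (i + 1) \<le> 0) \<and>
     (\<forall>v\<in>V. \<forall>i<H. g i v + l v (i + 1) = 1) \<and>
     (\<forall>u\<in>V. \<forall>v\<in>V - {u}. \<forall>i\<le>H. l u i + g i v \<ge> x u v) \<and>
     (\<forall>v\<in>V. \<forall>i\<le>H. 0 \<le> l v i \<and> l v i \<le> 1 \<and> 0 \<le> g i v \<and> g i v \<le> 1)"

definition in_A :: "'a set \<Rightarrow> 'a \<Rightarrow> nat \<Rightarrow> ('a \<Rightarrow> 'a \<Rightarrow> real) \<Rightarrow>
    ('a \<Rightarrow> nat \<Rightarrow> real) \<Rightarrow> bool" where
  "in_A V r H x y \<longleftrightarrow>
     arc_constraints V r x \<and>
     y r 0 = 1 \<and>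
     (\<forall>i\<in>{1..H}. y r i = 0) \<and>
     (\<forall>v\<in>V - {r}. y v 0 = 0) \<and>
     (\<forall>v\<in>V - {r}. (\<Sum>i=1..H. y v i) = 1) \<and>
     (\<forall>u\<in>V. \<forall>v\<in>V - {u}. \<forall>i<H. y u i - y v (i + 1) + x u v \<le> 1) \<and>
     (\<forall>u\<in>V. \<forall>v\<in>V - {u}. y u H + x u v \<le> 1) \<and>
     (\<forall>v\<in>V. \<forall>i\<le>H. 0 \<le> y v i \<and> y v i \<le> 1)"

definition proj_P :: "'a set \<Rightarrow> 'a \<Rightarrow> nat \<Rightarrow> ('a \<Rightarrow> 'a \<Rightarrow> real) set" where
  "proj_P V r H = {x. \<exists>l g. in_P V r H x l g}"

definition proj_A :: "'a set \<Rightarrow> 'a \<Rightarrow> nat \<Rightarrow> ('a \<Rightarrow> 'a \<Rightarrow> real) set" where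
  "proj_A V r H = {x. \<exists>y. in_A V r H x y}"

end

(* Given x in the projection of P, build y level by level: put mass b v on level 1 and let
   every later level carry the least mass the constraints y(u,i) - y(v,i+1) + x(u,v) <= 1 force
   (forced_mass).  Choosing b v = max (x(r,v)) (1 - mass forced on levels 2..H) is a fixed-point
   equation for a Lipschitz self-map of the cube [0,1]^(V-{r}), solved by Brouwer's theorem.
   Counting in-degrees (X1) shows that at the fixed point the forced mass on levels 2..H never
   exceeds 1 - x(r,v), so every y(v,_) is a probability distribution with y(v,1) >= x(r,v).
   The partial-ordering variables l, g are needed only to show that no arc enters r and that
   forced mass on level H cannot be pushed along an arc. *)

theory Submission
  imports Defs "HOL-Analysis.Brouwer_Fixpoint"
begin

text \<open>Kuhn's lemma on the grid of mesh \<open>1/p\<close> yields a cell in which, for every \<open>i\<close>, one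
  vertex has \<open>z i \<le> f z i\<close> and another \<open>f z i \<le> z i\<close>; by the Lipschitz bound the base
  vertex of the cell is then a \<open>(1 + L n)/p\<close>-approximate fixed point.\<close>

lemma approx_fixpoint_lipschitz_cube:
  fixes f :: "(nat \<Rightarrow> real) \<Rightarrow> nat \<Rightarrow> real" and L e :: real
  assumes into: "\<And>z i. z \<in> {..<n} \<rightarrow> {0..1} \<Longrightarrow> i < n \<Longrightarrow> f z i \<in> {0..1}"
    and lip: "\<And>z z' i. z \<in> {..<n} \<rightarrow> {0..1} \<Longrightarrow> z' \<in> {..<n} \<rightarrow> {0..1} \<Longrightarrow> i < n \<Longrightarrow>
                \<bar>f z i - f z' i\<bar> \<le> L * (\<Sum>j<n. \<bar>z j - z' j\<bar>)"
    and "0 \<le> L" and "0 < e"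
  obtains z where "z \<in> {..<n} \<rightarrow> {0..1}" and "\<forall>i<n. \<bar>f z i - z i\<bar> \<le> e"
proof -
  obtain p :: nat where p: "(1 + L * n) / e < p"
    using reals_Archimedean2 by blast
  have "0 < 1 + L * n" using \<open>0 \<le> L\<close> by (simp add: add_pos_nonneg)
  then have "0 < p" using p \<open>0 < e\<close> by (metis divide_pos_pos of_nat_0_less_iff order.strict_trans)
  have p_e: "(1 + L * n) / p \<le> e"
    using p \<open>0 < p\<close> \<open>0 < e\<close> by (simp add: field_simps)
  define pt :: "(nat \<Rightarrow> nat) \<Rightarrow> nat \<Rightarrow> real" where "pt q = (\<lambda>i. q i / p)" for q
  define label :: "(nat \<Rightarrow> nat) \<Rightarrow> nat \<Rightarrow> nat" where
    "label q i = (if pt q i \<le> f (pt q) i \<and> q i \<noteq> p then 0 else 1)" for q i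
  have pt_cube: "pt q \<in> {..<n} \<rightarrow> {0..1}" if "\<forall>i<n. q i \<le> p" for q
    using that \<open>0 < p\<close> by (auto simp: pt_def)
  have label_0: "pt q i \<le> f (pt q) i" if "label q i = 0" for q i
    using that by (auto simp: label_def split: if_splits)
  have label_1: "f (pt q) i \<le> pt q i" if "label q i = 1" "\<forall>i<n. q i \<le> p" "i < n" for q i
    using that into[OF pt_cube[OF that(2)] that(3)] \<open>0 < p\<close>
    by (auto simp: label_def pt_def split: if_splits)
  obtain q where q: "\<forall>i<n. q i < p"
    and adjacent: "\<forall>i<n. \<exists>r s. (\<forall>j<n. q j \<le> r j \<and> r j \<le> q j + 1) \<and>
                      (\<forall>j<n. q j \<le> s j \<and> s j \<le> q j + 1) \<and> label r i \<noteq> label s i"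
  proof (rule kuhn_lemma[OF \<open>0 < p\<close>])
    show "\<forall>q. (\<forall>i<n. q i \<le> p) \<longrightarrow> (\<forall>i<n. q i = 0 \<longrightarrow> label q i = 0)"
      using \<open>0 < p\<close> into pt_cube by (fastforce simp: label_def pt_def)
  qed (auto simp: label_def)
  have q_grid: "\<forall>i<n. q i \<le> p" using q by (simp add: less_imp_le)
  have near: "0 \<le> pt r i - pt q i \<and> pt r i - pt q i \<le> 1 / p \<and> \<bar>f (pt r) i - f (pt q) i\<bar> \<le> L * n / p"
    if r: "\<forall>j<n. q j \<le> r j \<and> r j \<le> q j + 1" and "i < n" for r i
  proof -
    have r_grid: "\<forall>j<n. r j \<le> p" using r q by (metis Suc_eq_plus1 Suc_leI order.trans)
    have diff: "pt r j - pt q j \<in> {0..1 / p}" if "j < n" for j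
      using r that \<open>0 < p\<close> by (auto simp: pt_def divide_right_mono diff_divide_distrib[symmetric])
    have "\<bar>f (pt r) i - f (pt q) i\<bar> \<le> L * (\<Sum>j<n. \<bar>pt r j - pt q j\<bar>)"
      using lip[OF pt_cube[OF r_grid] pt_cube[OF q_grid] \<open>i < n\<close>] .
    also have "\<dots> \<le> L * (\<Sum>j<n. 1 / p)"
      using diff \<open>0 \<le> L\<close> by (intro mult_left_mono sum_mono) auto
    finally show ?thesis using diff[OF \<open>i < n\<close>] by simp
  qed
  show ?thesis
  proof (rule that[of "pt q"])
    show "pt q \<in> {..<n} \<rightarrow> {0..1}" using pt_cube[OF q_grid] .
    show "\<forall>i<n. \<bar>f (pt q) i - pt q i\<bar> \<le> e"
    proof (intro allI impI)
      fix i assume "i < n"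
      obtain r s where r: "\<forall>j<n. q j \<le> r j \<and> r j \<le> q j + 1" and s: "\<forall>j<n. q j \<le> s j \<and> s j \<le> q j + 1"
        and "label r i = 0" and "label s i = 1"
        using adjacent \<open>i < n\<close> by (metis label_def)
      have "pt r i \<le> f (pt r) i" using label_0 \<open>label r i = 0\<close> .
      moreover have "f (pt s) i \<le> pt s i"
        using label_1 \<open>label s i = 1\<close> \<open>i < n\<close> s q by (metis Suc_eq_plus1 Suc_leI order.trans)
      ultimately have "\<bar>f (pt q) i - pt q i\<bar> \<le> 1 / p + L * n / p"
        using near[OF r \<open>i < n\<close>] near[OF s \<open>i < n\<close>] by (auto simp: abs_le_iff)
      also have "\<dots> \<le> e" using p_e by (simp add: add_divide_distrib)
      finally show "\<bar>f (pt q) i - pt q i\<bar> \<le> e" .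
    qed
  qed
qed

lemma approx_fixpoint_lipschitz_cube_finite:
  fixes f :: "('a \<Rightarrow> real) \<Rightarrow> 'a \<Rightarrow> real" and L e :: real
  assumes "finite W"
    and into: "\<And>b v. b \<in> W \<rightarrow> {0..1} \<Longrightarrow> v \<in> W \<Longrightarrow> f b v \<in> {0..1}"
    and lip: "\<And>b b' v. b \<in> W \<rightarrow> {0..1} \<Longrightarrow> b' \<in> W \<rightarrow> {0..1} \<Longrightarrow> v \<in> W \<Longrightarrow>
                \<bar>f b v - f b' v\<bar> \<le> L * (\<Sum>u\<in>W. \<bar>b u - b' u\<bar>)"
    and "0 \<le> L" and "0 < e"
  obtains b where "b \<in> W \<rightarrow> {0..1}" and "\<forall>v\<in>W. \<bar>f b v - b v\<bar> \<le> e"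
proof -
  define n where "n = card W"
  obtain idx where idx: "bij_betw idx W {..<n}"
    using ex_bij_betw_finite_nat[OF \<open>finite W\<close>] by (auto simp: n_def atLeast0LessThan)
  define elt where "elt = inv_into W idx"
  have elt: "bij_betw elt {..<n} W" unfolding elt_def by (rule bij_betw_inv_into[OF idx])
  have elt_idx: "elt (idx v) = v" if "v \<in> W" for v
    using idx that unfolding elt_def by (simp add: bij_betw_inv_into_left)
  have pull: "(\<lambda>v. z (idx v)) \<in> W \<rightarrow> {0..1::real}" if "z \<in> {..<n} \<rightarrow> {0..1}" for z
    using that bij_betwE[OF idx] by auto
  define g where "g z i = f (\<lambda>v. z (idx v)) (elt i)" for z i
  obtain z where z: "z \<in> {..<n} \<rightarrow> {0..1}" and fix_z: "\<forall>i<n. \<bar>g z i - z i\<bar> \<le> e"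
  proof (rule approx_fixpoint_lipschitz_cube[of n g L e])
    show "g z i \<in> {0..1}" if "z \<in> {..<n} \<rightarrow> {0..1}" "i < n" for z i
      unfolding g_def using into[OF pull[OF that(1)]] bij_betwE[OF elt] that(2) by blast
    show "\<bar>g z i - g z' i\<bar> \<le> L * (\<Sum>j<n. \<bar>z j - z' j\<bar>)"
      if "z \<in> {..<n} \<rightarrow> {0..1}" "z' \<in> {..<n} \<rightarrow> {0..1}" "i < n" for z z' i
      using lip[OF pull[OF that(1)] pull[OF that(2)], of "elt i"] bij_betwE[OF elt] that(3)
        sum.reindex_bij_betw[OF idx, of "\<lambda>j. \<bar>z j - z' j\<bar>"]
      by (auto simp: g_def)
  qed (use assms in auto)
  show ?thesis
  proof (rule that[OF pull[OF z]], intro ballI)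
    fix v assume "v \<in> W"
    then show "\<bar>f (\<lambda>v. z (idx v)) v - z (idx v)\<bar> \<le> e"
      using fix_z bij_betwE[OF idx] elt_idx by (fastforce simp: g_def)
  qed
qed

lemma continuous_on_lipschitz_sum_abs:
  fixes f :: "('a \<Rightarrow> real) \<Rightarrow> real"
  assumes "finite W"
    and lip: "\<And>b b'. b \<in> C \<Longrightarrow> b' \<in> C \<Longrightarrow> \<bar>f b - f b'\<bar> \<le> L * (\<Sum>u\<in>W. \<bar>b u - b' u\<bar>)"
  shows "continuous_on C f"
  unfolding continuous_on_def
proof
  fix b0 assume "b0 \<in> C"
  have "continuous_on C (\<lambda>b. L * (\<Sum>u\<in>W. \<bar>b u - b0 u\<bar>))"
    by (intro continuous_intros continuous_on_subset[OF continuous_on_product_coordinates]) auto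
  then have "((\<lambda>b. L * (\<Sum>u\<in>W. \<bar>b u - b0 u\<bar>)) \<longlongrightarrow> 0) (at b0 within C)"
    using \<open>b0 \<in> C\<close> unfolding continuous_on_def by fastforce
  moreover have "\<forall>\<^sub>F b in at b0 within C. norm (f b - f b0) \<le> L * (\<Sum>u\<in>W. \<bar>b u - b0 u\<bar>)"
    unfolding eventually_at_filter
    by (intro always_eventually allI impI) (use lip \<open>b0 \<in> C\<close> in auto)
  ultimately have "((\<lambda>b. f b - f b0) \<longlongrightarrow> 0) (at b0 within C)"
    by (rule Lim_null_comparison[rotated])
  then show "(f \<longlongrightarrow> f b0) (at b0 within C)"
    by (rule LIM_zero_cancel)
qed

text \<open>The library theorem \<open>brouwer\<close> needs a \<open>euclidean_space\<close> type, whose dimension is fixed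
  by the type; the dimension of \<open>[0,1]\<^sup>W\<close> varies with \<open>W\<close>, so the fixed point is obtained from
  approximate ones by compactness of the cube in the product topology.\<close>

lemma fixpoint_lipschitz_cube_finite:
  fixes f :: "('a \<Rightarrow> real) \<Rightarrow> 'a \<Rightarrow> real" and L :: real
  assumes "finite W"
    and into: "\<And>b v. b \<in> W \<rightarrow> {0..1} \<Longrightarrow> v \<in> W \<Longrightarrow> f b v \<in> {0..1}"
    and lip: "\<And>b b' v. b \<in> W \<rightarrow> {0..1} \<Longrightarrow> b' \<in> W \<rightarrow> {0..1} \<Longrightarrow> v \<in> W \<Longrightarrow>
                \<bar>f b v - f b' v\<bar> \<le> L * (\<Sum>u\<in>W. \<bar>b u - b' u\<bar>)"
    and "0 \<le> L"
  obtains b where "b \<in> W \<rightarrow> {0..1}" and "\<forall>v\<in>W. f b v = b v"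
proof -
  define C where "C = (\<Pi>\<^sub>E v\<in>UNIV. if v \<in> W then {0..1::real} else {0})"
  define defect where "defect b = (\<Sum>v\<in>W. \<bar>f b v - b v\<bar>)" for b
  have C_cube: "C \<subseteq> W \<rightarrow> {0..1}"
  proof (intro subsetI Pi_I)
    fix b v assume "b \<in> C" "v \<in> W"
    have "b v \<in> (if v \<in> W then {0..1} else {0})"
      using \<open>b \<in> C\<close> unfolding C_def by (rule PiE_mem) simp
    with \<open>v \<in> W\<close> show "b v \<in> {0..1}" by simp
  qed
  have "compact C"
    unfolding C_def compactin_euclidean_iff[symmetric] euclidean_product_topology[symmetric]
    by (auto simp: compactin_PiE)
  moreover have "C \<noteq> {}" by (auto simp: C_def PiE_eq_empty_iff)
  moreover have "continuous_on C defect"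
  proof -
    have "continuous_on C (\<lambda>b. f b v)" if "v \<in> W" for v
      by (rule continuous_on_lipschitz_sum_abs[OF \<open>finite W\<close>]) (use lip C_cube that in blast)
    then show ?thesis
      unfolding defect_def
      by (intro continuous_intros continuous_on_subset[OF continuous_on_product_coordinates]) auto
  qed
  ultimately obtain b where "b \<in> C" and b_min: "\<forall>c\<in>C. defect b \<le> defect c"
    using continuous_attains_inf by blast
  have "defect b \<le> 0 + e" if "0 < e" for e
  proof -
    define e' where "e' = e / (card W + 1)"
    have "0 < e'" using \<open>0 < e\<close> by (simp add: e'_def)
    obtain c where c: "c \<in> W \<rightarrow> {0..1}" and c_fix: "\<forall>v\<in>W. \<bar>f c v - c v\<bar> \<le> e'"
      using approx_fixpoint_lipschitz_cube_finite[of W f L e', OF assms \<open>0 < e'\<close>] by blast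
    define c' where "c' v = (if v \<in> W then c v else 0)" for v
    have "c' \<in> C" using c by (auto simp: C_def c'_def)
    have "f c' v = f c v" if "v \<in> W" for v
      using lip[OF C_cube[THEN subsetD, OF \<open>c' \<in> C\<close>] c that] by (simp add: c'_def)
    then have "defect c' \<le> card W * e'"
      using c_fix sum_bounded_above[of W "\<lambda>v. \<bar>f c' v - c' v\<bar>" e']
      by (simp add: defect_def c'_def)
    also have "\<dots> \<le> e"
      using \<open>0 < e\<close> by (simp add: e'_def field_simps)
    finally show ?thesis using b_min \<open>c' \<in> C\<close> by fastforce
  qed
  then have "defect b \<le> 0"
    by (rule field_le_epsilon)
  then have "\<forall>v\<in>W. f b v = b v"
    using sum_nonneg_eq_0_iff[OF \<open>finite W\<close>, of "\<lambda>v. \<bar>f b v - b v\<bar>"]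
    by (simp add: defect_def antisym sum_nonneg)
  then show ?thesis using that C_cube \<open>b \<in> C\<close> by blast
qed

lemma sum_pos_part_le:
  fixes a :: "'b \<Rightarrow> real"
  assumes "finite S" and "\<forall>j\<in>S. 0 \<le> a j" and "0 \<le> c"
  shows "(\<Sum>j\<in>S. max 0 (a j - c)) \<le> max 0 (sum a S - c)"
  using assms
proof (induction S rule: finite_induct)
  case (insert j S)
  have "0 \<le> a j" and "0 \<le> sum a S" using insert.prems by (auto intro: sum_nonneg)
  have "(\<Sum>i\<in>insert j S. max 0 (a i - c)) \<le> max 0 (a j - c) + max 0 (sum a S - c)"
    using insert by simp
  also have "\<dots> \<le> max 0 (sum a (insert j S) - c)"
    using \<open>0 \<le> a j\<close> \<open>0 \<le> sum a S\<close> \<open>0 \<le> c\<close> insert.hyps by (simp add: max_def)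
  finally show ?case .
qed simp

text \<open>\<open>forced_mass x W b k v\<close> is the least value of \<open>y\<^bsub>v,k+1\<^esub>\<close> compatible with the
  constraints \<open>y\<^bsub>u,k\<^esub> - y\<^bsub>v,k+1\<^esub> + x\<^bsub>u,v\<^esub> \<le> 1\<close> once the level-one masses are
  \<open>y\<^bsub>v,1\<^esub> = b v\<close>; \<open>deep_mass\<close> is the resulting mass on levels \<open>2..H\<close>.\<close>

primrec forced_mass :: "('a \<Rightarrow> 'a \<Rightarrow> real) \<Rightarrow> 'a set \<Rightarrow> ('a \<Rightarrow> real) \<Rightarrow> nat \<Rightarrow> 'a \<Rightarrow> real" where
  "forced_mass x W b 0 v = b v"
| "forced_mass x W b (Suc k) v = Max (insert 0 ((\<lambda>u. forced_mass x W b k u - (1 - x u v)) ` (W - {v})))"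

declare forced_mass.simps(2) [simp del]

definition deep_mass :: "('a \<Rightarrow> 'a \<Rightarrow> real) \<Rightarrow> 'a set \<Rightarrow> nat \<Rightarrow> ('a \<Rightarrow> real) \<Rightarrow> 'a \<Rightarrow> real" where
  "deep_mass x W H b v = (\<Sum>k<H - 1. forced_mass x W b (Suc k) v)"

definition level_one_update ::
    "('a \<Rightarrow> 'a \<Rightarrow> real) \<Rightarrow> 'a \<Rightarrow> 'a set \<Rightarrow> nat \<Rightarrow> ('a \<Rightarrow> real) \<Rightarrow> 'a \<Rightarrow> real" where
  "level_one_update x r W H b v = max (x r v) (1 - deep_mass x W H b v)"

lemma forced_mass_Suc_le_iff:
  assumes "finite W"
  shows "forced_mass x W b (Suc k) v \<le> M \<longleftrightarrow>
           0 \<le> M \<and> (\<forall>u\<in>W - {v}. forced_mass x W b k u - (1 - x u v) \<le> M)"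
  using assms by (simp add: forced_mass.simps(2))

lemma forced_mass_Suc_nonneg: "finite W \<Longrightarrow> 0 \<le> forced_mass x W b (Suc k) v"
  using forced_mass_Suc_le_iff[of W x b k v "forced_mass x W b (Suc k) v"] by simp

lemma forced_mass_Suc_ge:
  "finite W \<Longrightarrow> u \<in> W - {v} \<Longrightarrow> forced_mass x W b k u - (1 - x u v) \<le> forced_mass x W b (Suc k) v"
  using forced_mass_Suc_le_iff[of W x b k v "forced_mass x W b (Suc k) v"] by simp

lemma forced_mass_nonneg:
  "finite W \<Longrightarrow> \<forall>u\<in>W. 0 \<le> b u \<Longrightarrow> v \<in> W \<Longrightarrow> 0 \<le> forced_mass x W b k v"
  by (cases k) (simp_all add: forced_mass_Suc_nonneg)

lemma forced_mass_lipschitz: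
  assumes "finite W" and "v \<in> W"
  shows "\<bar>forced_mass x W b k v - forced_mass x W b' k v\<bar> \<le> (\<Sum>u\<in>W. \<bar>b u - b' u\<bar>)"
  using \<open>v \<in> W\<close>
proof (induction k arbitrary: v)
  case 0
  then show ?case using member_le_sum[OF \<open>v \<in> W\<close>, of "\<lambda>u. \<bar>b u - b' u\<bar>"] \<open>finite W\<close> by simp
next
  case (Suc k)
  define D where "D = (\<Sum>u\<in>W. \<bar>b u - b' u\<bar>)"
  have "0 \<le> D" by (simp add: D_def sum_nonneg)
  have step: "forced_mass x W c (Suc k) v \<le> forced_mass x W c' (Suc k) v + D"
    if "\<forall>u\<in>W. forced_mass x W c k u \<le> forced_mass x W c' k u + D" for c c'
    unfolding forced_mass_Suc_le_iff[OF \<open>finite W\<close>]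
  proof (intro conjI ballI)
    show "0 \<le> forced_mass x W c' (Suc k) v + D"
      using forced_mass_Suc_nonneg[OF \<open>finite W\<close>] \<open>0 \<le> D\<close> by (rule add_nonneg_nonneg)
    fix u assume "u \<in> W - {v}"
    then show "forced_mass x W c k u - (1 - x u v) \<le> forced_mass x W c' (Suc k) v + D"
      using that forced_mass_Suc_ge[OF \<open>finite W\<close>, of u v x c' k] by fastforce
  qed
  have "\<forall>u\<in>W. \<bar>forced_mass x W b k u - forced_mass x W b' k u\<bar> \<le> D"
    using Suc.IH unfolding D_def by blast
  then have "forced_mass x W b (Suc k) v \<le> forced_mass x W b' (Suc k) v + D"
    and "forced_mass x W b' (Suc k) v \<le> forced_mass x W b (Suc k) v + D"
    by (intro step; force simp: abs_le_iff)+
  then show ?case unfolding D_def by linarith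
qed

lemma deep_mass_nonneg: "finite W \<Longrightarrow> 0 \<le> deep_mass x W H b v"
  by (simp add: deep_mass_def sum_nonneg forced_mass_Suc_nonneg)

lemma level_one_update_lipschitz:
  assumes "finite W" and "v \<in> W"
  shows "\<bar>level_one_update x r W H b v - level_one_update x r W H b' v\<bar>
           \<le> real (H - 1) * (\<Sum>u\<in>W. \<bar>b u - b' u\<bar>)"
proof -
  have "\<bar>level_one_update x r W H b v - level_one_update x r W H b' v\<bar>
          \<le> \<bar>deep_mass x W H b v - deep_mass x W H b' v\<bar>"
    unfolding level_one_update_def by (simp add: max_def abs_le_iff) linarith
  also have "\<dots> \<le> (\<Sum>k<H - 1. \<bar>forced_mass x W b (Suc k) v - forced_mass x W b' (Suc k) v\<bar>)"
    unfolding deep_mass_def sum_subtractf[symmetric] by (rule sum_abs)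
  also have "\<dots> \<le> (\<Sum>k<H - 1. \<Sum>u\<in>W. \<bar>b u - b' u\<bar>)"
    by (intro sum_mono forced_mass_lipschitz assms)
  finally show ?thesis by simp
qed

lemma forced_mass_Suc_le_sum_pos_part:
  assumes "finite W"
  shows "forced_mass x W b (Suc k) v \<le> (\<Sum>u\<in>W - {v}. max 0 (forced_mass x W b k u - (1 - x u v)))"
  unfolding forced_mass_Suc_le_iff[OF assms]
proof (intro conjI ballI)
  show "0 \<le> (\<Sum>u\<in>W - {v}. max 0 (forced_mass x W b k u - (1 - x u v)))"
    by (simp add: sum_nonneg)
  fix u assume "u \<in> W - {v}"
  then have "max 0 (forced_mass x W b k u - (1 - x u v))
               \<le> (\<Sum>u\<in>W - {v}. max 0 (forced_mass x W b k u - (1 - x u v)))"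
    using assms by (intro member_le_sum) auto
  then show "forced_mass x W b k u - (1 - x u v)
               \<le> (\<Sum>u\<in>W - {v}. max 0 (forced_mass x W b k u - (1 - x u v)))"
    by linarith
qed

lemma fixpoint_forced_mass_le_indegree:
  assumes "finite W"
    and x_01: "\<forall>u\<in>W. \<forall>v\<in>W - {u}. 0 \<le> x u v \<and> x u v \<le> 1"
    and indegree: "\<forall>v\<in>W. x r v + (\<Sum>u\<in>W - {v}. x u v) \<le> 1"
    and b_nonneg: "\<forall>v\<in>W. 0 \<le> b v"
    and fixpoint: "\<forall>v\<in>W. level_one_update x r W H b v = b v"
    and "m \<le> H - 1"
  shows "\<forall>v\<in>W. (\<Sum>j<m. forced_mass x W b (Suc j) v) \<le> (\<Sum>u\<in>W - {v}. x u v)"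
  using \<open>m \<le> H - 1\<close>
proof (induction m)
  case 0
  then show ?case using x_01 by (auto intro: sum_nonneg)
next
  case (Suc m)
  have levels_le_1: "(\<Sum>j<Suc m. forced_mass x W b j u) \<le> 1" if "u \<in> W" for u
  proof -
    have split: "(\<Sum>j<Suc m. forced_mass x W b j u) = b u + (\<Sum>j<m. forced_mass x W b (Suc j) u)"
      unfolding sum.lessThan_Suc_shift by simp
    consider "b u = x r u" | "b u = 1 - deep_mass x W H b u"
      using fixpoint \<open>u \<in> W\<close> unfolding level_one_update_def by (metis max_def)
    then show ?thesis
    proof cases
      case 1
      then show ?thesis using split Suc indegree \<open>u \<in> W\<close> by fastforce
    next
      case 2
      have "(\<Sum>j<m. forced_mass x W b (Suc j) u) \<le> deep_mass x W H b u"
        unfolding deep_mass_def using Suc.prems \<open>finite W\<close>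
        by (intro sum_mono2) (auto simp: forced_mass_Suc_nonneg)
      then show ?thesis using split 2 by linarith
    qed
  qed
  txt \<open>The arc \<open>u \<rightarrow> v\<close> forces at most \<open>x u v\<close> of the unit mass of \<open>u\<close> onto \<open>v\<close>, summed over
    all levels.\<close>
  show ?case
  proof
    fix v assume "v \<in> W"
    have "(\<Sum>j<Suc m. forced_mass x W b (Suc j) v)
            \<le> (\<Sum>j<Suc m. \<Sum>u\<in>W - {v}. max 0 (forced_mass x W b j u - (1 - x u v)))"
      by (intro sum_mono forced_mass_Suc_le_sum_pos_part \<open>finite W\<close>)
    also have "\<dots> = (\<Sum>u\<in>W - {v}. \<Sum>j<Suc m. max 0 (forced_mass x W b j u - (1 - x u v)))"
      by (rule sum.swap)
    also have "\<dots> \<le> (\<Sum>u\<in>W - {v}. max 0 (1 - (1 - x u v)))"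
    proof (intro sum_mono order.trans[OF sum_pos_part_le] max.mono)
      fix u assume "u \<in> W - {v}"
      then show "0 \<le> 1 - x u v" and "(\<Sum>j<Suc m. forced_mass x W b j u) - (1 - x u v) \<le> 1 - (1 - x u v)"
        using x_01 \<open>v \<in> W\<close> levels_le_1[of u] by auto
      show "\<forall>j\<in>{..<Suc m}. 0 \<le> forced_mass x W b j u"
        using \<open>u \<in> W - {v}\<close> b_nonneg \<open>finite W\<close> by (auto intro: forced_mass_nonneg)
    qed auto
    also have "\<dots> = (\<Sum>u\<in>W - {v}. x u v)"
      using x_01 \<open>v \<in> W\<close> by (intro sum.cong) auto
    finally show "(\<Sum>j<Suc m. forced_mass x W b (Suc j) v) \<le> (\<Sum>u\<in>W - {v}. x u v)" .
  qed
qed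

lemma fixpoint_level_masses:
  assumes "finite W"
    and "\<forall>u\<in>W. \<forall>v\<in>W - {u}. 0 \<le> x u v \<and> x u v \<le> 1"
    and indegree: "\<forall>v\<in>W. x r v + (\<Sum>u\<in>W - {v}. x u v) \<le> 1"
    and "\<forall>v\<in>W. 0 \<le> b v"
    and fixpoint: "\<forall>v\<in>W. level_one_update x r W H b v = b v"
    and "v \<in> W"
  shows "x r v \<le> b v" and "b v + deep_mass x W H b v = 1"
proof -
  have "deep_mass x W H b v \<le> (\<Sum>u\<in>W - {v}. x u v)"
    using fixpoint_forced_mass_le_indegree[OF assms(1-5) order.refl] \<open>v \<in> W\<close>
    unfolding deep_mass_def by blast
  then have "x r v \<le> 1 - deep_mass x W H b v" using indegree \<open>v \<in> W\<close> by fastforce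
  then have "b v = 1 - deep_mass x W H b v"
    using fixpoint \<open>v \<in> W\<close> unfolding level_one_update_def by (metis max.absorb2)
  with \<open>x r v \<le> 1 - deep_mass x W H b v\<close>
  show "x r v \<le> b v" and "b v + deep_mass x W H b v = 1" by simp_all
qed

lemma arc_constraintsD:
  assumes "arc_constraints V r x"
  shows arc_constraints_indegree: "v \<in> V \<Longrightarrow> (\<Sum>u\<in>V - {v}. x u v) \<le> 1"
    and arc_constraints_nonneg: "u \<in> V \<Longrightarrow> v \<in> V - {u} \<Longrightarrow> 0 \<le> x u v"
    and arc_constraints_le_1: "u \<in> V \<Longrightarrow> v \<in> V - {u} \<Longrightarrow> x u v \<le> 1"
  using assms unfolding arc_constraints_def by auto

lemma arc_constraints_root_indegree:
  assumes "arc_constraints V r x" and "finite V" and "r \<in> V" and "v \<in> V - {r}"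
  shows "x r v + (\<Sum>u\<in>V - {r} - {v}. x u v) \<le> 1"
proof -
  have "V - {v} = insert r (V - {r} - {v})" using assms(3,4) by auto
  then have "(\<Sum>u\<in>V - {v}. x u v) = x r v + (\<Sum>u\<in>V - {r} - {v}. x u v)"
    using \<open>finite V\<close> by simp
  moreover have "(\<Sum>u\<in>V - {v}. x u v) \<le> 1"
    using arc_constraints_indegree[OF assms(1)] \<open>v \<in> V - {r}\<close> by simp
  ultimately show ?thesis by linarith
qed

lemma arc_constraints_level_one_masses:
  assumes arcs: "arc_constraints V r x" and "finite V" and "r \<in> V"
  obtains b where "b \<in> V - {r} \<rightarrow> {0..1}"
    and "\<forall>v\<in>V - {r}. x r v \<le> b v \<and> b v + deep_mass x (V - {r}) H b v = 1"
proof -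
  define W where "W = V - {r}"
  have "finite W" using \<open>finite V\<close> by (simp add: W_def)
  have x_01: "\<forall>u\<in>W. \<forall>v\<in>W - {u}. 0 \<le> x u v \<and> x u v \<le> 1"
    using arc_constraints_nonneg[OF arcs] arc_constraints_le_1[OF arcs] by (auto simp: W_def)
  have indegree: "\<forall>v\<in>W. x r v + (\<Sum>u\<in>W - {v}. x u v) \<le> 1"
    using arc_constraints_root_indegree[OF arcs \<open>finite V\<close> \<open>r \<in> V\<close>] by (simp add: W_def)
  obtain b where b: "b \<in> W \<rightarrow> {0..1}" and fixpoint: "\<forall>v\<in>W. level_one_update x r W H b v = b v"
  proof (rule fixpoint_lipschitz_cube_finite[OF \<open>finite W\<close>, where L = "real (H - 1)"])
    show "level_one_update x r W H b v \<in> {0..1}" if "v \<in> W" for b v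
      using arc_constraints_nonneg[OF arcs \<open>r \<in> V\<close>, of v] arc_constraints_le_1[OF arcs \<open>r \<in> V\<close>, of v]
        deep_mass_nonneg[OF \<open>finite W\<close>, of x H b v] that
      by (auto simp: level_one_update_def W_def)
  qed (use level_one_update_lipschitz[OF \<open>finite W\<close>] in auto)
  then have "\<forall>v\<in>W. 0 \<le> b v" by auto
  with b show ?thesis
    using that fixpoint_level_masses[OF \<open>finite W\<close> x_01 indegree _ fixpoint] by (simp add: W_def)
qed

lemma in_PD:
  assumes "in_P V r H x l g"
  shows in_P_arc_constraints: "arc_constraints V r x"
    and in_P_root_g0: "g 0 r = 0"
    and in_P_l1: "v \<in> V - {r} \<Longrightarrow> l v 1 = 0"
    and in_P_gH: "v \<in> V - {r} \<Longrightarrow> g H v = 0"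
    and in_P_l_mono: "v \<in> V \<Longrightarrow> i < H \<Longrightarrow> l v i \<le> l v (Suc i)"
    and in_P_g_l: "v \<in> V \<Longrightarrow> i < H \<Longrightarrow> g i v = 1 - l v (Suc i)"
    and in_P_cover: "u \<in> V \<Longrightarrow> v \<in> V - {u} \<Longrightarrow> i \<le> H \<Longrightarrow> x u v \<le> l u i + g i v"
    and in_P_l_le_1: "v \<in> V \<Longrightarrow> i \<le> H \<Longrightarrow> l v i \<le> 1"
  using assms unfolding in_P_def by (auto simp: algebra_simps)

lemma in_P_no_arc_into_root:
  assumes P: "in_P V r H x l g" and "0 < H" and "r \<in> V" and "u \<in> V - {r}"
  shows "x u r = 0"
proof -
  have "x u r \<le> l u 0 + g 0 r"
    using in_P_cover[OF P, of u r 0] assms(3,4) by auto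
  moreover have "0 \<le> x u r"
    using arc_constraints_nonneg[OF in_P_arc_constraints[OF P], of u r] assms(3,4) by auto
  moreover have "l u 0 \<le> l u 1"
    using in_P_l_mono[OF P, of u 0] assms(2,4) by simp
  ultimately show ?thesis
    using in_P_l1[OF P \<open>u \<in> V - {r}\<close>] in_P_root_g0[OF P] by linarith
qed

lemma in_P_forced_mass_le:
  assumes P: "in_P V r H x l g"
    and b_le_1: "\<forall>v\<in>V - {r}. b v \<le> 1" and "finite V" and "k < H"
  shows "\<forall>v\<in>V - {r}. forced_mass x (V - {r}) b k v \<le> 1 - l v (Suc k)"
  using \<open>k < H\<close>
proof (induction k)
  case 0
  then show ?case using in_P_l1[OF P] b_le_1 by simp
next
  case (Suc k)
  show ?case
  proof
    fix v assume "v \<in> V - {r}"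
    show "forced_mass x (V - {r}) b (Suc k) v \<le> 1 - l v (Suc (Suc k))"
      unfolding forced_mass_Suc_le_iff[OF finite_Diff[OF \<open>finite V\<close>]]
    proof (intro conjI ballI)
      show "0 \<le> 1 - l v (Suc (Suc k))"
        using in_P_l_le_1[OF P, of v "Suc (Suc k)"] Suc.prems \<open>v \<in> V - {r}\<close> by simp
      fix u assume "u \<in> V - {r} - {v}"
      have "forced_mass x (V - {r}) b k u \<le> 1 - l u (Suc k)"
        using Suc \<open>u \<in> V - {r} - {v}\<close> by simp
      moreover have "x u v \<le> l u (Suc k) + g (Suc k) v"
        using in_P_cover[OF P, of u v "Suc k"] Suc.prems \<open>u \<in> V - {r} - {v}\<close> \<open>v \<in> V - {r}\<close> by auto
      moreover have "g (Suc k) v = 1 - l v (Suc (Suc k))"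
        using in_P_g_l[OF P, of v "Suc k"] Suc.prems \<open>v \<in> V - {r}\<close> by simp
      ultimately show "forced_mass x (V - {r}) b k u - (1 - x u v) \<le> 1 - l v (Suc (Suc k))"
        by simp
    qed
  qed
qed

lemma in_P_last_level_le:
  assumes P: "in_P V r H x l g"
    and "\<forall>v\<in>V - {r}. b v \<le> 1" and "finite V" and "0 < H"
    and "u \<in> V - {r}" and "v \<in> V - {r, u}"
  shows "forced_mass x (V - {r}) b (H - 1) u + x u v \<le> 1"
proof -
  have "forced_mass x (V - {r}) b (H - 1) u \<le> 1 - l u H"
    using in_P_forced_mass_le[OF assms(1-3), of "H - 1"] \<open>0 < H\<close> \<open>u \<in> V - {r}\<close> by simp
  moreover have "x u v \<le> l u H + g H v"
    using in_P_cover[OF P, of u v H] \<open>u \<in> V - {r}\<close> \<open>v \<in> V - {r, u}\<close> by simp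
  moreover have "g H v = 0" using in_P_gH[OF P] \<open>v \<in> V - {r, u}\<close> by simp
  ultimately show ?thesis by linarith
qed

definition hop_assignment :: "'a \<Rightarrow> ('a \<Rightarrow> 'a \<Rightarrow> real) \<Rightarrow> 'a set \<Rightarrow> ('a \<Rightarrow> real) \<Rightarrow> 'a \<Rightarrow> nat \<Rightarrow> real"
  where "hop_assignment r x W b v i =
    (if v = r then (if i = 0 then 1 else 0) else if i = 0 then 0 else forced_mass x W b (i - 1) v)"

lemma hop_assignment_Suc: "v \<noteq> r \<Longrightarrow> hop_assignment r x W b v (Suc k) = forced_mass x W b k v"
  by (simp add: hop_assignment_def)

lemma hop_assignment_nonneg:
  "finite W \<Longrightarrow> \<forall>u\<in>W. 0 \<le> b u \<Longrightarrow> v \<in> insert r W \<Longrightarrow> 0 \<le> hop_assignment r x W b v i"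
  by (auto simp: hop_assignment_def forced_mass_nonneg)

lemma hop_assignment_sum:
  assumes "v \<noteq> r" and "0 < H"
  shows "(\<Sum>i=1..H. hop_assignment r x W b v i) = b v + deep_mass x W H b v"
proof -
  have "(\<Sum>i=1..H. hop_assignment r x W b v i) = (\<Sum>k<Suc (H - 1). forced_mass x W b k v)"
    using assms by (simp add: sum.atLeast1_atMost_eq hop_assignment_Suc)
  also have "\<dots> = b v + deep_mass x W H b v"
    unfolding deep_mass_def sum.lessThan_Suc_shift by simp
  finally show ?thesis .
qed

lemma hop_assignment_propagation:
  assumes "finite W" and "u \<in> W - {v}" and "u \<noteq> r" and "v \<noteq> r" and "0 < i"
  shows "hop_assignment r x W b u i - hop_assignment r x W b v (i + 1) + x u v \<le> 1"
proof -
  have "Suc (i - 1) = i" using \<open>0 < i\<close> by simp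
  then have "hop_assignment r x W b u i = forced_mass x W b (i - 1) u"
    using hop_assignment_Suc[OF \<open>u \<noteq> r\<close>, of x W b "i - 1"] by simp
  then show ?thesis
    using forced_mass_Suc_ge[OF assms(1,2), of x b "i - 1"] \<open>Suc (i - 1) = i\<close>
    by (simp add: hop_assignment_Suc[OF \<open>v \<noteq> r\<close>])
qed

locale hop_assignment_data =
  fixes V :: "'a set" and r :: 'a and H :: nat and x :: "'a \<Rightarrow> 'a \<Rightarrow> real" and b :: "'a \<Rightarrow> real"
  assumes arcs: "arc_constraints V r x" and finite: "finite V" and root: "r \<in> V" and H_pos: "0 < H"
    and no_arc_into_root: "\<forall>u\<in>V - {r}. x u r = 0"
    and b_nonneg: "\<forall>v\<in>V - {r}. 0 \<le> b v"
    and level_masses: "\<forall>v\<in>V - {r}. x r v \<le> b v \<and> b v + deep_mass x (V - {r}) H b v = 1"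
    and last_level: "\<forall>u\<in>V - {r}. \<forall>v\<in>V - {r, u}. forced_mass x (V - {r}) b (H - 1) u + x u v \<le> 1"
begin

abbreviation y :: "'a \<Rightarrow> nat \<Rightarrow> real" where "y \<equiv> hop_assignment r x (V - {r}) b"

lemma y_nonneg: "v \<in> V \<Longrightarrow> 0 \<le> y v i"
  using hop_assignment_nonneg[OF finite_Diff[OF finite] b_nonneg] by simp

lemma y_sum: "v \<in> V - {r} \<Longrightarrow> (\<Sum>i=1..H. y v i) = 1"
  using hop_assignment_sum[of v r H] H_pos level_masses by simp

lemma y_le_1:
  assumes "v \<in> V" and "i \<le> H"
  shows "y v i \<le> 1"
proof (cases "v \<noteq> r \<and> i \<noteq> 0")
  case True
  then have "y v i \<le> (\<Sum>i=1..H. y v i)"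
    using assms y_nonneg finite by (intro member_le_sum) auto
  then show ?thesis using y_sum True assms by simp
qed (auto simp: hop_assignment_def)

lemma y_step:
  assumes uv: "u \<in> V" "v \<in> V - {u}" and "i < H"
  shows "y u i - y v (i + 1) + x u v \<le> 1"
proof -
  have "x u v \<le> 1" using arc_constraints_le_1[OF arcs uv] .
  moreover have "0 \<le> y v (i + 1)" and "y u i \<le> 1" using uv y_nonneg y_le_1 \<open>i < H\<close> by auto
  ultimately consider "u = r" "i = 0" | "u = r" "i \<noteq> 0" | "u \<noteq> r" "v = r" | "u \<noteq> r" "i = 0"
    | "u \<noteq> r" "v \<noteq> r" "i \<noteq> 0"
    by blast
  then show ?thesis
  proof cases
    case 1
    then show ?thesis using level_masses uv(2) by (simp add: hop_assignment_def)
  next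
    case 3
    then show ?thesis using no_arc_into_root uv(1) \<open>y u i \<le> 1\<close> by (simp add: hop_assignment_def)
  next
    case 5
    moreover have "u \<in> V - {r} - {v}" using uv 5 by auto
    ultimately show ?thesis using hop_assignment_propagation[OF finite_Diff[OF finite]] by simp
  qed (use \<open>x u v \<le> 1\<close> \<open>0 \<le> y v (i + 1)\<close> in \<open>simp_all add: hop_assignment_def\<close>)
qed

lemma y_last_level:
  assumes uv: "u \<in> V" "v \<in> V - {u}"
  shows "y u H + x u v \<le> 1"
proof -
  consider "u = r" | "u \<noteq> r" "v = r" | "u \<in> V - {r}" "v \<in> V - {r, u}"
    using uv by blast
  then show ?thesis
  proof cases
    case 1
    then show ?thesis using H_pos arc_constraints_le_1[OF arcs uv] by (simp add: hop_assignment_def)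
  next
    case 2
    then show ?thesis using no_arc_into_root y_le_1[of u H] uv(1) by simp
  next
    case 3
    then show ?thesis using last_level hop_assignment_Suc[of u r x "V - {r}" b "H - 1"] H_pos by simp
  qed
qed

lemma in_A_hop_assignment: "in_A V r H x y"
proof -
  have "y r 0 = 1" and "\<forall>i\<in>{1..H}. y r i = 0" and "\<forall>v\<in>V - {r}. y v 0 = 0"
    by (auto simp: hop_assignment_def)
  then show ?thesis
    unfolding in_A_def using arcs y_sum y_step y_last_level y_nonneg y_le_1 by simp
qed

end

theorem theorem2:
  fixes V :: "'a set" and r :: 'a and H :: nat
  assumes "H \<ge> 1" and "finite V" and "r \<in> V"
  shows "proj_P V r H \<subseteq> proj_A V r H"
proof
  fix x assume "x \<in> proj_P V r H"
  then obtain l g where P: "in_P V r H x l g" by (auto simp: proj_P_def)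
  have arcs: "arc_constraints V r x" using in_P_arc_constraints[OF P] .
  obtain b where "b \<in> V - {r} \<rightarrow> {0..1}"
    and masses: "\<forall>v\<in>V - {r}. x r v \<le> b v \<and> b v + deep_mass x (V - {r}) H b v = 1"
    using arc_constraints_level_one_masses[OF arcs \<open>finite V\<close> \<open>r \<in> V\<close>] by blast
  then have b_01: "\<forall>v\<in>V - {r}. 0 \<le> b v \<and> b v \<le> 1" by auto
  have "hop_assignment_data V r H x b"
  proof
    show "0 < H" using \<open>H \<ge> 1\<close> by simp
    show "\<forall>u\<in>V - {r}. x u r = 0"
      using in_P_no_arc_into_root[OF P _ \<open>r \<in> V\<close>] \<open>H \<ge> 1\<close> by simp
    show "\<forall>u\<in>V - {r}. \<forall>v\<in>V - {r, u}. forced_mass x (V - {r}) b (H - 1) u + x u v \<le> 1"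
      using in_P_last_level_le[OF P] b_01 \<open>finite V\<close> \<open>H \<ge> 1\<close> by simp
  qed (use arcs \<open>finite V\<close> \<open>r \<in> V\<close> b_01 masses in simp_all)
  then have "in_A V r H x (hop_assignment r x (V - {r}) b)"
    by (rule hop_assignment_data.in_A_hop_assignment)
  then show "x \<in> proj_A V r H" by (auto simp: proj_A_def)
qed

end
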